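(* Let $q\ge 2$ be an even integer, $m\ge 4$ an integer, $\pi$ a permutation of $\{0,1,\dots,m-3\}$, and $c\in\mathbb Z_q$. For $d\in\{0,1\}$ define the Boolean functions $\zeta^d,\eta^d$ in the variables $x_0,\dots,x_{m-3}$ (values in $\mathbb Z_2$) by $$\zeta^d=\sum_{\alpha=0}^{m-4}x_{\pi(\alpha)}x_{\pi(\alpha+1)}+d\,x_{\pi(m-3)},\qquad \eta^d=\sum_{\alpha=0}^{m-4}\bar x_{\pi(\alpha)}\bar x_{\pi(\alpha+1)}+\bar d\,\bar x_{\pi(m-3)}+d,$$ and the generalized Boolean function $g^d:\mathbb Z_2^m\to\mathbb Z_q$ by $$g^d=\frac q2\Big[\bar x_{m-1}x_{m-2}\,\zeta^d+x_{m-1}\bar x_{m-2}\,\eta^d+\bar d\,x_{m-1}x_{m-2}\Big]+c .$$ Then $(\mathbf a,\mathbf b)=\big(\Psi_{2^{m-2}-1}(g^0),\Psi_{2^{m-2}-1}(g^1)\big)$ is a $(2^{m-1}+2,\;2^{\pi(m-3)}+1)$-CZCP.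
   Context: $\omega=e^{2\pi\sqrt{-1}/q}$. For $x\in\{0,1\}$, $\bar x=1-x$. For an integer $0\le i<2^m$, $\mathbf r_i=(r_{i,0},\dots,r_{i,m-1})$ is its binary representation, $i=\sum_j r_{i,j}2^j$. For a function $f:\mathbb Z_2^m\to\mathbb Z_q$, $\Psi(f)$ is the length-$2^m$ complex sequence $(\omega^{f(\mathbf r_0)},\omega^{f(\mathbf r_1)},\dots,\omega^{f(\mathbf r_{2^m-1})})$, and for $0\le L<2^{m-1}$ the truncated sequence $\Psi_L(f)$ is obtained from $\Psi(f)$ by deleting its first $L$ and its last $L$ entries (so it has length $2^m-2L$). Aperiodic correlation: for complex sequences $\mathbf a,\mathbf b$ of length $N$, $\rho_{\mathbf a,\mathbf b}(\tau)=\sum_{k=0}^{N-1-\tau}a_k\overline{b_{k+\tau}}$ for $0\le\tau\le N-1$, $\rho_{\mathbf a,\mathbf b}(\tau)=\sum_{k=0}^{N-1+\tau}a_{k-\tau}\overline{b_k}$ for $-(N-1)\le\tau\le -1$, and $0$ for $|\tau|\ge N$; $\rho_{\mathbf a}=\rho_{\mathbf a,\mathbf a}$. CZCP: for positive integers $N,Z$ let $\mathcal T_1=\{1,\dots,Z\}$ and $\mathcal T_2=\{N-Z,\dots,N-1\}$. A pair $(\mathbf a,\mathbf b)$ of length-$N$ sequences is an $(N,Z)$-CZCP (cross Z-complementary pair) if (C1) $\rho_{\mathbf a}(\tau)+\rho_{\mathbf b}(\tau)=0$ for all $\tau$ with $|\tau|\in\mathcal T_1\cup\mathcal T_2$, and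 (C2) $\rho_{\mathbf a,\mathbf b}(\tau)+\rho_{\mathbf b,\mathbf a}(\tau)=0$ for all $\tau$ with $|\tau|\in\mathcal T_2$. *)

theory Defs
  imports "HOL-Analysis.Analysis" "HOL-Combinatorics.Permutations"
begin

definition omega :: "nat \<Rightarrow> complex" where
  "omega q = exp (2 * pi * \<i> / of_nat q)"

definition bit_of :: "nat \<Rightarrow> nat \<Rightarrow> int" where
  "bit_of i j = int ((i div 2 ^ j) mod 2)"

text \<open>Psi(f): length 2^m sequence; f is a generalized Boolean function given on
  binary vectors (as functions nat => int, entries 0/1), values in Z (read mod q).\<close>
definition Psi :: "nat \<Rightarrow> nat \<Rightarrow> ((nat \<Rightarrow> int) \<Rightarrow> int) \<Rightarrow> nat \<Rightarrow> complex" where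
  "Psi q m f k = (if k < 2 ^ m then omega q powi (f (bit_of k) mod int q) else 0)"

definition PsiL :: "nat \<Rightarrow> nat \<Rightarrow> nat \<Rightarrow> ((nat \<Rightarrow> int) \<Rightarrow> int) \<Rightarrow> nat \<Rightarrow> complex" where
  "PsiL q m L f k = (if k < 2 ^ m - 2 * L then Psi q m f (k + L) else 0)"

definition acorr :: "nat \<Rightarrow> (nat \<Rightarrow> complex) \<Rightarrow> (nat \<Rightarrow> complex) \<Rightarrow> int \<Rightarrow> complex" where
  "acorr N a b \<tau> =
     (if \<bar>\<tau>\<bar> \<ge> int N then 0
      else if \<tau> \<ge> 0 then (\<Sum>k = 0..<N - nat \<tau>. a k * cnj (b (k + nat \<tau>)))
      else (\<Sum>k = 0..<N - nat (-\<tau>). a (k + nat (-\<tau>)) * cnj (b k)))"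

definition CZCP :: "nat \<Rightarrow> nat \<Rightarrow> (nat \<Rightarrow> complex) \<Rightarrow> (nat \<Rightarrow> complex) \<Rightarrow> bool" where
  "CZCP N Z a b \<longleftrightarrow>
     (\<forall>\<tau>::int. (nat \<bar>\<tau>\<bar> \<in> {1..Z} \<union> {N - Z..N - 1}) \<longrightarrow>
        acorr N a a \<tau> + acorr N b b \<tau> = 0) \<and>
     (\<forall>\<tau>::int. (nat \<bar>\<tau>\<bar> \<in> {N - Z..N - 1}) \<longrightarrow>
        acorr N a b \<tau> + acorr N b a \<tau> = 0)"

definition zeta :: "nat \<Rightarrow> (nat \<Rightarrow> nat) \<Rightarrow> int \<Rightarrow> (nat \<Rightarrow> int) \<Rightarrow> int" where
  "zeta m \<pi> d x = ((\<Sum>\<alpha> = 0..m - 4. x (\<pi> \<alpha>) * x (\<pi> (\<alpha> + 1))) + d * x (\<pi> (m - 3))) mod 2"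

definition eta :: "nat \<Rightarrow> (nat \<Rightarrow> nat) \<Rightarrow> int \<Rightarrow> (nat \<Rightarrow> int) \<Rightarrow> int" where
  "eta m \<pi> d x = ((\<Sum>\<alpha> = 0..m - 4. (1 - x (\<pi> \<alpha>)) * (1 - x (\<pi> (\<alpha> + 1))))
                   + (1 - d) * (1 - x (\<pi> (m - 3))) + d) mod 2"

definition gfun :: "nat \<Rightarrow> nat \<Rightarrow> (nat \<Rightarrow> nat) \<Rightarrow> int \<Rightarrow> int \<Rightarrow> (nat \<Rightarrow> int) \<Rightarrow> int" where
  "gfun q m \<pi> c d x =
     int (q div 2) *
       (((1 - x (m - 1)) * x (m - 2) * zeta m \<pi> d x
         + x (m - 1) * (1 - x (m - 2)) * eta m \<pi> d x
         + (1 - d) * x (m - 1) * x (m - 2)) mod 2) + c"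

end

theory Submission
  imports Defs
begin

text \<open>
  Write \<open>n = m - 2\<close>, \<open>M = 2^n\<close>, and let \<open>f\<close> be the path form
  \<open>\<Sum>\<alpha> < n - 1. x(\<pi> \<alpha>) x(\<pi> (\<alpha> + 1))\<close> in \<open>n\<close> binary variables. The \<open>\<plusminus>1\<close> sequences
  \<open>P i = (-1)^f(i)\<close> and \<open>Q i = (-1)^(f(i) + i(\<pi> (n - 1)))\<close> form a Golay complementary pair:
  for a shift \<open>t\<close>, the terms in which \<open>i\<close> and \<open>i + t\<close> differ in bit \<open>\<pi> (n - 1)\<close> vanish, and
  the others cancel in pairs obtained by flipping bit \<open>\<pi> (h + 1)\<close> of both \<open>i\<close> and \<open>i + t\<close>,
  where \<open>h\<close> is the last position in \<open>\<pi>\<close>-order at which they differ. The flip changes the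
  parity of \<open>f(i) + f(i + t)\<close>, because the neighbours of \<open>\<pi> (h + 1)\<close> on the path are \<open>\<pi> h\<close>,
  where \<open>i\<close> and \<open>i + t\<close> differ, and \<open>\<pi> (h + 2)\<close>, where they agree.

  Splitting an index of \<open>g\<^sup>d\<close> by its two top bits shows that, up to the factor \<open>\<omega>\<^sup>c\<close>, the
  truncated sequences are \<open>a = (1, P, Q reversed, -1)\<close> and \<open>b = (1, Q, -P reversed, 1)\<close>.
  For shifts \<open>1 \<le> t \<le> M\<close> the autocorrelation sum of \<open>(a, b)\<close> is twice that of \<open>(P, Q)\<close> plus
  boundary and crossing terms that cancel. For a shift \<open>2M + 1 - s\<close> with \<open>s \<le> 2^\<pi>(n - 1)\<close>
  only entries \<open>P i\<close>, \<open>Q i\<close> with \<open>i < s\<close> meet, and these agree because bit \<open>\<pi> (n - 1)\<close> of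
  such \<open>i\<close> is zero.
\<close>

definition parity_sign :: "int \<Rightarrow> int" where
  "parity_sign z = (if even z then 1 else -1)"

lemma parity_sign_add: "parity_sign (a + b) = parity_sign a * parity_sign b"
  by (auto simp: parity_sign_def)

lemma parity_sign_mult_self [simp]: "parity_sign a * parity_sign a = 1"
  by (simp add: parity_sign_def)

lemma parity_sign_mod_2 [simp]: "parity_sign (a mod 2) = parity_sign a"
  by (simp add: parity_sign_def)

lemma parity_sign_0 [simp]: "parity_sign 0 = 1"
  and parity_sign_1 [simp]: "parity_sign 1 = -1"
  by (simp_all add: parity_sign_def)

lemma parity_sign_mult_odd: "parity_sign (a * (1 - 2 * b)) = parity_sign a"
proof -
  have "a * (1 - 2 * b) = a + 2 * (- a * b)"
    by (simp add: algebra_simps)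
  then show ?thesis
    by (simp add: parity_sign_add parity_sign_def)
qed

lemma bit_of_eq: "bit_of i j = of_bool (bit i j)"
  by (simp add: bit_of_def bit_iff_odd odd_iff_mod_2_eq_one)

lemma parity_sign_bit_of_mult:
  "parity_sign (bit_of i a) * parity_sign (bit_of j b) = (if bit i a = bit j b then 1 else -1)"
  by (simp add: bit_of_eq parity_sign_def)

lemma bit_of_flip_bit: "bit_of (flip_bit p i) = (bit_of i)(p := 1 - bit_of i p)"
  by (rule ext) (simp add: bit_of_eq bit_flip_bit_iff)

lemma bit_less_exp_nat: "(i::nat) < 2 ^ n \<Longrightarrow> bit i j \<Longrightarrow> j < n"
  by (metis bit_take_bit_iff take_bit_nat_eq_self)

lemma flip_bit_less_exp_nat:
  assumes "(i::nat) < 2 ^ n" and "p < n"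
  shows "flip_bit p i < 2 ^ n"
proof -
  have "take_bit n (flip_bit p i) = flip_bit p i"
    using assms by (simp add: take_bit_flip_bit_eq take_bit_nat_eq_self)
  then show ?thesis
    by (metis take_bit_nat_less_exp)
qed

lemma flip_bit_add_nat:
  assumes "bit (i::nat) p = bit (i + t) p"
  shows "flip_bit p i + t = flip_bit p (i + t)"
proof (cases "bit i p")
  case True
  have unset: "unset_bit p a + 2 ^ p = a" if "bit (a::nat) p" for a
  proof -
    have "set_bit p (unset_bit p a) = a"
      using that by (intro bit_eqI) (auto simp: bit_set_bit_iff bit_unset_bit_iff)
    moreover have "\<not> bit (unset_bit p a) p"
      by (simp add: bit_unset_bit_iff)
    ultimately show ?thesis
      by (simp add: set_bit_eq)
  qed
  have "unset_bit p i + t + 2 ^ p = unset_bit p (i + t) + 2 ^ p"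
    using unset[of i] unset[of "i + t"] True assms by simp
  then show ?thesis
    using True assms by (simp add: flip_bit_eq_if)
next
  case False
  then show ?thesis
    using assms by (simp add: flip_bit_eq_if set_bit_eq)
qed

section \<open>Golay complementary pairs of path type\<close>

definition path_form :: "nat \<Rightarrow> (nat \<Rightarrow> nat) \<Rightarrow> (nat \<Rightarrow> int) \<Rightarrow> int" where
  "path_form n \<pi> x = (\<Sum>\<alpha> = 0..n - 2. x (\<pi> \<alpha>) * x (\<pi> (\<alpha> + 1)))"

lemma path_form_cong:
  assumes perm: "\<pi> permutes {0..n - 1}" and n: "n \<ge> 2" and eq: "\<And>j. j < n \<Longrightarrow> x j = y j"
  shows "path_form n \<pi> x = path_form n \<pi> y"
proof -
  have "\<pi> \<alpha> < n" if "\<alpha> \<le> n - 1" for \<alpha>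
    using permutes_in_image[OF perm, of \<alpha>] that n by auto
  then show ?thesis
    unfolding path_form_def using eq n by (intro sum.cong) auto
qed

lemma path_form_flip:
  assumes perm: "\<pi> permutes {0..n - 1}" and h: "h + 1 \<le> n - 1" and p: "p = \<pi> (h + 1)"
  shows "path_form n \<pi> (x(p := 1 - x p)) = path_form n \<pi> x + x (\<pi> h) * (1 - 2 * x p)
      + (if h + 2 \<le> n - 1 then (1 - 2 * x p) * x (\<pi> (h + 2)) else 0)"
proof -
  have inj: "\<pi> a = \<pi> b \<longleftrightarrow> a = b" for a b
    using permutes_inj[OF perm] by (auto dest: injD)
  let ?x' = "x(p := 1 - x p)"
  have factor: "?x' (\<pi> \<alpha>) * ?x' (\<pi> (\<alpha> + 1)) = x (\<pi> \<alpha>) * x (\<pi> (\<alpha> + 1))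
      + (if \<alpha> = h then x (\<pi> h) * (1 - 2 * x p) else 0)
      + (if \<alpha> = h + 1 then (1 - 2 * x p) * x (\<pi> (h + 2)) else 0)" for \<alpha>
    using inj[of \<alpha> "h + 1"] inj[of "\<alpha> + 1" "h + 1"] unfolding p by (auto simp: algebra_simps)
  show ?thesis
    unfolding path_form_def factor sum.distrib using h by simp arith
qed

lemma parity_sign_path_form_flip:
  assumes perm: "\<pi> permutes {0..n - 1}" and h: "h + 1 \<le> n - 1" and p: "p = \<pi> (h + 1)"
  shows "parity_sign (path_form n \<pi> (x(p := 1 - x p))) = parity_sign (path_form n \<pi> x)
      * parity_sign (x (\<pi> h)) * (if h + 2 \<le> n - 1 then parity_sign (x (\<pi> (h + 2))) else 1)"
  using parity_sign_mult_odd[of "x (\<pi> h)" "x p"] parity_sign_mult_odd[of "x (\<pi> (h + 2))" "x p"]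
  unfolding path_form_flip[OF assms]
  by (simp add: parity_sign_add mult.commute[of "1 - 2 * x p"])

definition golay_seq :: "nat \<Rightarrow> (nat \<Rightarrow> nat) \<Rightarrow> nat \<Rightarrow> int" where
  "golay_seq n \<pi> i = parity_sign (path_form n \<pi> (bit_of i))"

definition golay_mate :: "nat \<Rightarrow> (nat \<Rightarrow> nat) \<Rightarrow> nat \<Rightarrow> int" where
  "golay_mate n \<pi> i = parity_sign (path_form n \<pi> (bit_of i) + bit_of i (\<pi> (n - 1)))"

definition autocorr_term :: "(nat \<Rightarrow> int) \<Rightarrow> (nat \<Rightarrow> int) \<Rightarrow> nat \<Rightarrow> nat \<Rightarrow> int" where
  "autocorr_term A B t k = A k * A (k + t) + B k * B (k + t)"

lemma golay_seq_eq_mate: "i < 2 ^ \<pi> (n - 1) \<Longrightarrow> golay_seq n \<pi> i = golay_mate n \<pi> i"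
  using bit_less_exp_nat[of i "\<pi> (n - 1)" "\<pi> (n - 1)"]
  by (auto simp: golay_seq_def golay_mate_def bit_of_eq)

lemma autocorr_term_golay:
  "autocorr_term (golay_seq n \<pi>) (golay_mate n \<pi>) t i = golay_seq n \<pi> i * golay_seq n \<pi> (i + t)
     * (if bit i (\<pi> (n - 1)) = bit (i + t) (\<pi> (n - 1)) then 2 else 0)"
proof -
  have "autocorr_term (golay_seq n \<pi>) (golay_mate n \<pi>) t i = golay_seq n \<pi> i * golay_seq n \<pi> (i + t)
     * (1 + parity_sign (bit_of i (\<pi> (n - 1))) * parity_sign (bit_of (i + t) (\<pi> (n - 1))))"
    by (simp add: autocorr_term_def golay_seq_def golay_mate_def parity_sign_add algebra_simps)
  then show ?thesis
    by (simp add: parity_sign_bit_of_mult)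
qed

lemma golay_seq_flip_bit_pair:
  assumes perm: "\<pi> permutes {0..n - 1}" and h: "h + 1 \<le> n - 1"
    and diff: "bit i (\<pi> h) \<noteq> bit j (\<pi> h)"
    and agree: "h + 2 \<le> n - 1 \<Longrightarrow> bit i (\<pi> (h + 2)) = bit j (\<pi> (h + 2))"
  shows "golay_seq n \<pi> (flip_bit (\<pi> (h + 1)) i) * golay_seq n \<pi> (flip_bit (\<pi> (h + 1)) j)
    = - (golay_seq n \<pi> i * golay_seq n \<pi> j)"
proof -
  define e where "e k = (if h + 2 \<le> n - 1 then parity_sign (bit_of k (\<pi> (h + 2))) else 1)" for k
  have flip: "golay_seq n \<pi> (flip_bit (\<pi> (h + 1)) k) = golay_seq n \<pi> k * parity_sign (bit_of k (\<pi> h)) * e k"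
    for k
    unfolding golay_seq_def bit_of_flip_bit e_def by (rule parity_sign_path_form_flip[OF perm h refl])
  have "e j = e i"
    using agree by (simp add: e_def bit_of_eq)
  moreover have "e i * e i = 1"
    by (simp add: e_def)
  moreover have "parity_sign (bit_of i (\<pi> h)) * parity_sign (bit_of j (\<pi> h)) = -1"
    using diff by (simp add: parity_sign_bit_of_mult)
  ultimately show ?thesis
    unfolding flip by (simp add: algebra_simps)
qed

text \<open>Unlike \<open>sum_involution_eq_0\<close> in \<open>HOL-Library.Disjoint_Sets\<close>, fixed points are
  allowed; they are the terms with \<open>G k = 0\<close>.\<close>
lemma sum_involution_neg_eq_0:
  fixes G :: "'a \<Rightarrow> 'b::linordered_ab_group_add"
  assumes "finite S" and "\<And>k. k \<in> S \<Longrightarrow> \<sigma> k \<in> S" and "\<And>k. k \<in> S \<Longrightarrow> \<sigma> (\<sigma> k) = k"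
    and "\<And>k. k \<in> S \<Longrightarrow> G (\<sigma> k) = - G k"
  shows "sum G S = 0"
proof -
  have "bij_betw \<sigma> S S"
    by (rule bij_betwI[where g = \<sigma>]) (use assms in auto)
  then have "sum G S = sum (G \<circ> \<sigma>) S"
    by (simp add: sum.reindex_bij_betw)
  also have "\<dots> = - sum G S"
    using assms(4) by (simp add: sum_negf)
  finally show ?thesis
    by simp
qed

definition top_diff :: "nat \<Rightarrow> (nat \<Rightarrow> nat) \<Rightarrow> nat \<Rightarrow> nat \<Rightarrow> nat" where
  "top_diff n \<pi> i j = Max {\<alpha>. \<alpha> < n \<and> bit i (\<pi> \<alpha>) \<noteq> bit j (\<pi> \<alpha>)}"

lemma top_diff_flip_bit [simp]: "top_diff n \<pi> (flip_bit p i) (flip_bit p j) = top_diff n \<pi> i j"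
  unfolding top_diff_def by (rule arg_cong[where f = Max]) (auto simp: bit_flip_bit_iff)

lemma top_diff_maximal:
  fixes i j :: nat
  assumes perm: "\<pi> permutes {0..n - 1}" and "i < 2 ^ n" "j < 2 ^ n" "i \<noteq> j"
  shows "top_diff n \<pi> i j < n" and "bit i (\<pi> (top_diff n \<pi> i j)) \<noteq> bit j (\<pi> (top_diff n \<pi> i j))"
    and "\<And>\<alpha>. top_diff n \<pi> i j < \<alpha> \<Longrightarrow> \<alpha> < n \<Longrightarrow> bit i (\<pi> \<alpha>) = bit j (\<pi> \<alpha>)"
proof -
  define D where "D = {\<alpha>. \<alpha> < n \<and> bit i (\<pi> \<alpha>) \<noteq> bit j (\<pi> \<alpha>)}"
  obtain k where k: "bit i k \<noteq> bit j k"
    using \<open>i \<noteq> j\<close> bit_eqI by blast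
  then have "k < n"
    using assms(2,3) bit_less_exp_nat by blast
  then have "k \<in> \<pi> ` {0..n - 1}"
    using permutes_image[OF perm] by auto
  then obtain \<alpha> where "\<alpha> \<in> {0..n - 1}" "\<pi> \<alpha> = k"
    by blast
  then have "\<alpha> \<in> D"
    using k \<open>k < n\<close> unfolding D_def by auto
  then have "D \<noteq> {}" and "finite D"
    unfolding D_def by auto
  then have "Max D \<in> D" and "\<And>\<beta>. \<beta> \<in> D \<Longrightarrow> \<beta> \<le> Max D"
    by auto
  then show "top_diff n \<pi> i j < n" and "bit i (\<pi> (top_diff n \<pi> i j)) \<noteq> bit j (\<pi> (top_diff n \<pi> i j))"
    and "\<And>\<alpha>. top_diff n \<pi> i j < \<alpha> \<Longrightarrow> \<alpha> < n \<Longrightarrow> bit i (\<pi> \<alpha>) = bit j (\<pi> \<alpha>)"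
    unfolding top_diff_def D_def[symmetric] by (auto simp: D_def not_le[symmetric])
qed

definition golay_pairing :: "nat \<Rightarrow> (nat \<Rightarrow> nat) \<Rightarrow> nat \<Rightarrow> nat \<Rightarrow> nat" where
  "golay_pairing n \<pi> t i = (if bit i (\<pi> (n - 1)) = bit (i + t) (\<pi> (n - 1))
     then flip_bit (\<pi> (top_diff n \<pi> i (i + t) + 1)) i else i)"

lemma golay_pairing_involution:
  assumes perm: "\<pi> permutes {0..n - 1}" and n: "n \<ge> 2" and t: "1 \<le> t" and i: "i + t < 2 ^ n"
  defines "\<sigma> \<equiv> golay_pairing n \<pi> t" and "T \<equiv> autocorr_term (golay_seq n \<pi>) (golay_mate n \<pi>) t"
  shows "\<sigma> i + t < 2 ^ n \<and> \<sigma> (\<sigma> i) = i \<and> T (\<sigma> i) = - T i"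
proof (cases "bit i (\<pi> (n - 1)) = bit (i + t) (\<pi> (n - 1))")
  case False
  then show ?thesis
    using i by (simp add: \<sigma>_def T_def golay_pairing_def autocorr_term_golay)
next
  case agree_v: True
  define h where "h = top_diff n \<pi> i (i + t)"
  define p where "p = \<pi> (h + 1)"
  have "i < 2 ^ n" "i + t < 2 ^ n" "i \<noteq> i + t"
    using i t by auto
  note top = top_diff_maximal[OF perm this, folded h_def]
  have "h \<noteq> n - 1"
    using top(2) agree_v by auto
  then have h1: "h + 1 \<le> n - 1"
    using top(1) by linarith
  have "p < n"
    using permutes_in_image[OF perm, of "h + 1"] h1 n unfolding p_def by auto
  have agree_p: "bit i p = bit (i + t) p"
    using top(3) h1 n unfolding p_def by simp
  have \<sigma>i: "\<sigma> i = flip_bit p i"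
    using agree_v by (simp add: \<sigma>_def golay_pairing_def h_def p_def)
  have \<sigma>it: "\<sigma> i + t = flip_bit p (i + t)"
    unfolding \<sigma>i by (rule flip_bit_add_nat[OF agree_p])
  have range: "\<sigma> i + t < 2 ^ n"
    unfolding \<sigma>it using flip_bit_less_exp_nat \<open>i + t < 2 ^ n\<close> \<open>p < n\<close> by blast
  have agree_v': "bit (\<sigma> i) (\<pi> (n - 1)) = bit (\<sigma> i + t) (\<pi> (n - 1))"
    unfolding \<sigma>it unfolding \<sigma>i using agree_v by (auto simp: bit_flip_bit_iff)
  have "top_diff n \<pi> (\<sigma> i) (\<sigma> i + t) = h"
    unfolding \<sigma>it unfolding \<sigma>i by (simp add: h_def)
  moreover have "\<sigma> j = (if bit j (\<pi> (n - 1)) = bit (j + t) (\<pi> (n - 1))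
      then flip_bit (\<pi> (top_diff n \<pi> j (j + t) + 1)) j else j)" for j
    unfolding \<sigma>_def golay_pairing_def ..
  ultimately have "\<sigma> (\<sigma> i) = flip_bit p (\<sigma> i)"
    using agree_v' unfolding p_def by simp
  also have "\<dots> = i"
    unfolding \<sigma>i by (rule bit_eqI) (auto simp: bit_flip_bit_iff)
  finally have invol: "\<sigma> (\<sigma> i) = i" .
  have "golay_seq n \<pi> (\<sigma> i) * golay_seq n \<pi> (\<sigma> i + t) = - (golay_seq n \<pi> i * golay_seq n \<pi> (i + t))"
    unfolding \<sigma>it unfolding \<sigma>i p_def
    by (rule golay_seq_flip_bit_pair[OF perm h1 top(2)]) (use top(3) in auto)
  then have "T (\<sigma> i) = - T i"
    using agree_v agree_v' by (simp add: T_def autocorr_term_golay)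
  then show ?thesis
    using range invol by simp
qed

lemma golay_complementary:
  assumes perm: "\<pi> permutes {0..n - 1}" and n: "n \<ge> 2" and t: "1 \<le> t"
  shows "(\<Sum>i<2 ^ n - t. autocorr_term (golay_seq n \<pi>) (golay_mate n \<pi>) t i) = 0"
  using golay_pairing_involution[OF perm n t]
  by (intro sum_involution_neg_eq_0[where \<sigma> = "golay_pairing n \<pi> t"]) (auto simp: less_diff_conv)

section \<open>From a Golay pair to a cross Z-complementary pair\<close>

definition icorr :: "nat \<Rightarrow> (nat \<Rightarrow> int) \<Rightarrow> (nat \<Rightarrow> int) \<Rightarrow> nat \<Rightarrow> int" where
  "icorr N A B t = (\<Sum>k<N - t. A k * B (k + t))"

definition czcp_a :: "nat \<Rightarrow> (nat \<Rightarrow> int) \<Rightarrow> (nat \<Rightarrow> int) \<Rightarrow> nat \<Rightarrow> int" where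
  "czcp_a M P Q k = (if k = 0 then 1 else if k \<le> M then P (k - 1) else if k \<le> 2 * M then Q (2 * M - k)
     else if k = 2 * M + 1 then -1 else 0)"

definition czcp_b :: "nat \<Rightarrow> (nat \<Rightarrow> int) \<Rightarrow> (nat \<Rightarrow> int) \<Rightarrow> nat \<Rightarrow> int" where
  "czcp_b M P Q k = (if k = 0 then 1 else if k \<le> M then Q (k - 1) else if k \<le> 2 * M then - P (2 * M - k)
     else if k = 2 * M + 1 then 1 else 0)"

lemma czcp_autocorr_ends:
  assumes "1 \<le> t" "t \<le> M"
  shows "autocorr_term (czcp_a M P Q) (czcp_b M P Q) t 0
    + autocorr_term (czcp_a M P Q) (czcp_b M P Q) t (2 * M + 1 - t) = 0"
proof -
  have "2 * M + 1 - t + t = 2 * M + 1" "\<not> 2 * M + 1 - t \<le> M" "2 * M + 1 - t \<le> 2 * M"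
    "2 * M - (2 * M + 1 - t) = t - 1"
    using assms by auto
  then show ?thesis
    using assms by (simp add: autocorr_term_def czcp_a_def czcp_b_def)
qed

lemma czcp_autocorr_front:
  assumes "t \<le> M"
  shows "(\<Sum>k = 1..<M - t + 1. autocorr_term (czcp_a M P Q) (czcp_b M P Q) t k)
    = (\<Sum>i<M - t. autocorr_term P Q t i)"
proof -
  have "{1..<M - t + 1} = {Suc 0..<Suc (M - t)}"
    by simp
  then have "(\<Sum>k = 1..<M - t + 1. autocorr_term (czcp_a M P Q) (czcp_b M P Q) t k)
      = (\<Sum>i = 0..<M - t. autocorr_term (czcp_a M P Q) (czcp_b M P Q) t (Suc i))"
    by (simp only: sum.shift_bounds_Suc_ivl)
  also have "\<dots> = (\<Sum>i<M - t. autocorr_term P Q t i)"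
    unfolding lessThan_atLeast0
    by (intro sum.cong) (auto simp: autocorr_term_def czcp_a_def czcp_b_def)
  finally show ?thesis .
qed

lemma czcp_autocorr_back:
  assumes "t \<le> M"
  shows "(\<Sum>k = M + 1..<2 * M + 1 - t. autocorr_term (czcp_a M P Q) (czcp_b M P Q) t k)
    = (\<Sum>i<M - t. autocorr_term P Q t i)"
proof (rule sum.reindex_bij_witness[where i = "\<lambda>i. 2 * M - t - i" and j = "\<lambda>k. 2 * M - t - k"])
  fix k assume k: "k \<in> {M + 1..<2 * M + 1 - t}"
  then show "2 * M - t - (2 * M - t - k) = k" and "2 * M - t - k \<in> {..<M - t}"
    by auto
  have "\<not> k \<le> M" "k \<le> 2 * M" "\<not> k + t \<le> M" "k + t \<le> 2 * M" "2 * M - (k + t) = 2 * M - t - k"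
    "2 * M - k = 2 * M - t - k + t" "k \<noteq> 0"
    using k by auto
  then show "autocorr_term P Q t (2 * M - t - k) = autocorr_term (czcp_a M P Q) (czcp_b M P Q) t k"
    by (simp add: autocorr_term_def czcp_a_def czcp_b_def)
qed (use assms in auto)

lemma czcp_autocorr_crossing:
  assumes "1 \<le> t" "t \<le> M"
  shows "(\<Sum>k = M - t + 1..<M + 1. autocorr_term (czcp_a M P Q) (czcp_b M P Q) t k) = 0"
proof (rule sum_involution_neg_eq_0[where \<sigma> = "\<lambda>k. 2 * M + 1 - t - k"])
  fix k assume k: "k \<in> {M - t + 1..<M + 1}"
  then show "2 * M + 1 - t - k \<in> {M - t + 1..<M + 1}" and "2 * M + 1 - t - (2 * M + 1 - t - k) = k"
    using assms by auto
  define k' where "k' = 2 * M + 1 - t - k"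
  have "k \<noteq> 0" "k \<le> M" "\<not> k + t \<le> M" "k + t \<le> 2 * M" "k' \<noteq> 0" "k' \<le> M" "\<not> k' + t \<le> M"
    "k' + t \<le> 2 * M" "2 * M - (k + t) = k' - 1" "2 * M - (k' + t) = k - 1"
    using k assms unfolding k'_def by auto
  then show "autocorr_term (czcp_a M P Q) (czcp_b M P Q) t (2 * M + 1 - t - k)
    = - autocorr_term (czcp_a M P Q) (czcp_b M P Q) t k"
    unfolding k'_def[symmetric] by (simp add: autocorr_term_def czcp_a_def czcp_b_def)
qed simp

lemma czcp_autocorr_small_shift:
  assumes golay: "(\<Sum>i<M - t. autocorr_term P Q t i) = 0" and t: "1 \<le> t" "t \<le> M"
  shows "icorr (2 * M + 2) (czcp_a M P Q) (czcp_a M P Q) t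
    + icorr (2 * M + 2) (czcp_b M P Q) (czcp_b M P Q) t = 0"
proof -
  define F where "F = autocorr_term (czcp_a M P Q) (czcp_b M P Q) t"
  have "icorr (2 * M + 2) (czcp_a M P Q) (czcp_a M P Q) t
      + icorr (2 * M + 2) (czcp_b M P Q) (czcp_b M P Q) t = sum F {0..<2 * M + 2 - t}"
    unfolding icorr_def F_def autocorr_term_def by (simp add: sum.distrib lessThan_atLeast0)
  also have "\<dots> = sum F {0..<1} + sum F {1..<M - t + 1} + sum F {M - t + 1..<M + 1}
      + sum F {M + 1..<2 * M + 1 - t} + sum F {2 * M + 1 - t..<2 * M + 2 - t}"
  proof -
    have concat: "a \<le> b \<Longrightarrow> b \<le> c \<Longrightarrow> sum F {a..<b} + sum F {b..<c} = sum F {a..<c}" for a b c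
      by (rule sum.atLeastLessThan_concat)
    show ?thesis
      using concat[of 0 1 "M - t + 1"] concat[of 0 "M - t + 1" "M + 1"]
        concat[of 0 "M + 1" "2 * M + 1 - t"] concat[of 0 "2 * M + 1 - t" "2 * M + 2 - t"] t
      by linarith
  qed
  also have "\<dots> = (F 0 + F (2 * M + 1 - t)) + sum F {1..<M - t + 1} + sum F {M - t + 1..<M + 1}
      + sum F {M + 1..<2 * M + 1 - t}"
  proof -
    have "{0..<1} = {0::nat}" "{2 * M + 1 - t..<2 * M + 2 - t} = {2 * M + 1 - t}"
      using t by auto
    then show ?thesis
      by simp
  qed
  also have "\<dots> = 0"
    unfolding F_def czcp_autocorr_ends[OF t] czcp_autocorr_front[OF t(2)] czcp_autocorr_back[OF t(2)]
      czcp_autocorr_crossing[OF t] golay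
    by simp
  finally show ?thesis .
qed

lemma czcp_corr_large_shift:
  fixes P Q :: "nat \<Rightarrow> int"
  assumes s: "s < M" and agree: "\<And>i. i < s \<Longrightarrow> P i = Q i"
  shows "icorr (2 * M + 2) (czcp_a M P Q) (czcp_a M P Q) (2 * M + 1 - s)
      + icorr (2 * M + 2) (czcp_b M P Q) (czcp_b M P Q) (2 * M + 1 - s) = 0"
    and "icorr (2 * M + 2) (czcp_a M P Q) (czcp_b M P Q) (2 * M + 1 - s)
      + icorr (2 * M + 2) (czcp_b M P Q) (czcp_a M P Q) (2 * M + 1 - s) = 0"
proof -
  let ?A = "czcp_a M P Q" and ?B = "czcp_b M P Q" and ?t = "2 * M + 1 - s"
  have N: "2 * M + 2 - ?t = s + 1"
    using s by simp
  have "?A k * ?A (k + ?t) + ?B k * ?B (k + ?t) = 0 \<and> ?A k * ?B (k + ?t) + ?B k * ?A (k + ?t) = 0"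
    if k: "k < s + 1" for k
  proof -
    consider "k = 0" "s = 0" | "k = 0" "s > 0" | "k = s" "s > 0" | "0 < k" "k < s"
      using k by linarith
    then show ?thesis
    proof cases
      case 1
      then show ?thesis
        by (simp add: czcp_a_def czcp_b_def)
    next
      case 2
      have "\<not> ?t \<le> M" "?t \<le> 2 * M" "2 * M - ?t = s - 1"
        using 2 s by auto
      then show ?thesis
        using 2 agree[of "s - 1"] by (simp add: czcp_a_def czcp_b_def)
    next
      case 3
      then show ?thesis
        using s agree[of "s - 1"] by (simp add: czcp_a_def czcp_b_def)
    next
      case 4
      have "2 * M - (k + ?t) = s - 1 - k" "\<not> k + ?t \<le> M" "k + ?t \<le> 2 * M" "k \<le> M"
        using 4 s by auto
      then show ?thesis
        using 4 agree[of "s - 1 - k"] agree[of "k - 1"] by (simp add: czcp_a_def czcp_b_def) arith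
    qed
  qed
  then show "icorr (2 * M + 2) ?A ?A ?t + icorr (2 * M + 2) ?B ?B ?t = 0"
    and "icorr (2 * M + 2) ?A ?B ?t + icorr (2 * M + 2) ?B ?A ?t = 0"
    unfolding icorr_def N sum.distrib[symmetric] by (auto intro: sum.neutral)
qed

lemma acorr_scaled:
  assumes a: "\<forall>k<N. a k = w * of_int (A k)" and b: "\<forall>k<N. b k = w * of_int (B k)"
    and w: "norm w = 1" and \<tau>: "nat \<bar>\<tau>\<bar> < N"
  shows "acorr N a b \<tau> = of_int (if \<tau> \<ge> 0 then icorr N A B (nat \<tau>) else icorr N B A (nat (- \<tau>)))"
proof -
  have unit: "w * cnj w = 1"
    using complex_norm_square[of w] w by simp
  have "\<not> \<bar>\<tau>\<bar> \<ge> int N"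
    using \<tau> by linarith
  then show ?thesis
    unfolding acorr_def icorr_def lessThan_atLeast0 using a b
    by (auto simp: unit mult.commute intro!: sum.cong)
qed

lemma CZCP_of_golay:
  assumes golay: "\<And>t. 1 \<le> t \<Longrightarrow> (\<Sum>i<M - t. autocorr_term P Q t i) = 0"
    and agree: "\<And>i. i < s \<Longrightarrow> P i = Q i" and s: "s < M"
    and a: "\<forall>k<2 * M + 2. a k = w * of_int (czcp_a M P Q k)"
    and b: "\<forall>k<2 * M + 2. b k = w * of_int (czcp_b M P Q k)" and w: "norm w = 1"
  shows "CZCP (2 * M + 2) (s + 1) a b"
proof -
  define N where "N = 2 * M + 2"
  let ?A = "czcp_a M P Q" and ?B = "czcp_b M P Q"
  have auto: "acorr N a a \<tau> + acorr N b b \<tau>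
      = of_int (icorr N ?A ?A (nat \<bar>\<tau>\<bar>) + icorr N ?B ?B (nat \<bar>\<tau>\<bar>))"
    if "nat \<bar>\<tau>\<bar> < N" for \<tau>
    using acorr_scaled[OF a a w, of \<tau>] acorr_scaled[OF b b w, of \<tau>] that
    unfolding N_def by (cases "\<tau> \<ge> 0") auto
  have cross: "acorr N a b \<tau> + acorr N b a \<tau>
      = of_int (icorr N ?A ?B (nat \<bar>\<tau>\<bar>) + icorr N ?B ?A (nat \<bar>\<tau>\<bar>))"
    if "nat \<bar>\<tau>\<bar> < N" for \<tau>
    using acorr_scaled[OF a b w, of \<tau>] acorr_scaled[OF b a w, of \<tau>] that
    unfolding N_def by (cases "\<tau> \<ge> 0") auto
  have large: "icorr N ?A ?A t + icorr N ?B ?B t = 0 \<and> icorr N ?A ?B t + icorr N ?B ?A t = 0"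
    if "t \<in> {N - (s + 1)..N - 1}" for t
  proof -
    have "N - 1 - t < M" "t = 2 * M + 1 - (N - 1 - t)" "\<And>i. i < N - 1 - t \<Longrightarrow> P i = Q i"
      using that s agree unfolding N_def by auto
    then show ?thesis
      using czcp_corr_large_shift unfolding N_def by metis
  qed
  show ?thesis
    unfolding CZCP_def N_def[symmetric]
  proof (intro conjI allI impI)
    fix \<tau> :: int
    assume \<tau>: "nat \<bar>\<tau>\<bar> \<in> {1..s + 1} \<union> {N - (s + 1)..N - 1}"
    then have "nat \<bar>\<tau>\<bar> < N"
      using s unfolding N_def by auto
    moreover have "icorr N ?A ?A (nat \<bar>\<tau>\<bar>) + icorr N ?B ?B (nat \<bar>\<tau>\<bar>) = 0"
      using \<tau> czcp_autocorr_small_shift[OF golay] large s unfolding N_def by fastforce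
    ultimately show "acorr N a a \<tau> + acorr N b b \<tau> = 0"
      by (simp add: auto)
  next
    fix \<tau> :: int
    assume \<tau>: "nat \<bar>\<tau>\<bar> \<in> {N - (s + 1)..N - 1}"
    then have "nat \<bar>\<tau>\<bar> < N"
      unfolding N_def by auto
    then show "acorr N a b \<tau> + acorr N b a \<tau> = 0"
      using large[OF \<tau>] by (simp add: cross)
  qed
qed

section \<open>The truncated sequences of \<open>g\<^sup>d\<close>\<close>

lemma omega_neq_0: "omega q \<noteq> 0"
  by (simp add: omega_def)

lemma norm_omega: "norm (omega q) = 1"
proof -
  have "2 * pi * \<i> / of_nat q = \<i> * of_real (2 * pi / q)"
    by simp
  then show ?thesis
    unfolding omega_def by (metis norm_exp_i_times)
qed

lemma omega_pow_eq:
  assumes "q > 0"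
  shows "omega q ^ q = 1" and "even q \<Longrightarrow> omega q ^ (q div 2) = -1"
proof -
  have "omega q ^ k = exp (of_nat k * (2 * pi * \<i> / of_nat q))" for k
    unfolding omega_def by (rule exp_of_nat_mult[symmetric])
  moreover have "of_nat q * (2 * pi * \<i> / of_nat q) = 2 * of_real pi * \<i>"
    using assms by (simp add: field_simps)
  moreover have "of_nat (q div 2) * (2 * pi * \<i> / of_nat q) = of_real pi * \<i>" if "even q"
    using assms that by (auto elim!: evenE simp: field_simps)
  ultimately show "omega q ^ q = 1" and "even q \<Longrightarrow> omega q ^ (q div 2) = -1"
    by simp_all
qed

lemma omega_powi_mod: "q > 0 \<Longrightarrow> omega q powi (z mod int q) = omega q powi z"
proof -
  assume q: "q > 0"
  have "omega q powi (int q * (z div int q) + z mod int q)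
      = (omega q powi int q) powi (z div int q) * omega q powi (z mod int q)"
    using power_int_add[of "omega q" "int q * (z div int q)" "z mod int q"] omega_neq_0
    by (simp only: power_int_mult) simp
  also have "omega q powi int q = 1"
    using omega_pow_eq(1)[OF q] by simp
  finally show ?thesis
    by simp
qed

lemma Psi_half_parity:
  assumes q: "q > 0" "even q" and K: "K < 2 ^ m"
  shows "Psi q m (\<lambda>x. int (q div 2) * (X x mod 2) + c) K
    = omega q powi c * of_int (parity_sign (X (bit_of K)))"
proof -
  have half: "omega q powi int (q div 2) = -1"
    using omega_pow_eq(2)[OF q] by simp
  have "Psi q m (\<lambda>x. int (q div 2) * (X x mod 2) + c) K
      = omega q powi (int (q div 2) * (X (bit_of K) mod 2) + c)"
    unfolding Psi_def using K omega_powi_mod[OF q(1)] by simp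
  also have "\<dots> = (omega q powi int (q div 2)) powi (X (bit_of K) mod 2) * omega q powi c"
    by (simp add: power_int_add omega_neq_0 power_int_mult)
  also have "\<dots> = omega q powi c * of_int (parity_sign (X (bit_of K)))"
  proof -
    have "X (bit_of K) mod 2 = 0 \<or> X (bit_of K) mod 2 = 1"
      by auto
    then show ?thesis
      unfolding half parity_sign_mod_2[symmetric, of "X (bit_of K)"] by (auto simp: parity_sign_def)
  qed
  finally show ?thesis .
qed

lemma bit_of_exp_mult_add:
  assumes r: "r < 2 ^ n"
  shows "bit_of (2 ^ n * h + r) j = (if j < n then bit_of r j else bit_of h (j - n))"
proof -
  have "\<not> bit (push_bit n h) k \<or> \<not> bit r k" for k
    using bit_less_exp_nat[OF r, of k] by (auto simp: bit_push_bit_iff)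
  then have "bit (push_bit n h + r) j \<longleftrightarrow> bit (push_bit n h) j \<or> bit r j"
    by (rule bit_disjunctive_add_iff)
  moreover have "push_bit n h + r = 2 ^ n * h + r"
    by (simp add: push_bit_eq_mult)
  ultimately show ?thesis
    using bit_less_exp_nat[OF r, of j] by (auto simp: bit_of_eq bit_push_bit_iff)
qed

lemma bit_of_complement:
  assumes i: "i < 2 ^ n" and j: "j < n"
  shows "bit_of (2 ^ n - 1 - i) j = 1 - bit_of i j"
proof -
  have i2: "int i < 2 ^ n"
    using i by (metis of_nat_less_iff of_nat_numeral of_nat_power)
  have "not (int i) = (2 ^ n - 1 - int i) + (-1) * 2 ^ n"
    by (simp add: not_eq_complement)
  then have "not (int i) mod 2 ^ n = (2 ^ n - 1 - int i) mod 2 ^ n"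
    by (metis mod_mult_self1)
  also have "\<dots> = 2 ^ n - 1 - int i"
    using i2 by (intro mod_pos_pos_trivial) auto
  finally have "int (2 ^ n - 1 - i) = take_bit n (not (int i))"
    using i by (simp add: take_bit_eq_mod)
  then have "bit (2 ^ n - 1 - i) j \<longleftrightarrow> bit (take_bit n (not (int i))) j"
    by (metis bit_of_nat_iff_bit)
  also have "\<dots> \<longleftrightarrow> \<not> bit i j"
    using j by (simp add: bit_take_bit_iff bit_not_iff bit_of_nat_iff_bit)
  finally show ?thesis
    by (simp add: bit_of_eq)
qed

definition gfun_core :: "nat \<Rightarrow> (nat \<Rightarrow> nat) \<Rightarrow> int \<Rightarrow> (nat \<Rightarrow> int) \<Rightarrow> int" where
  "gfun_core m \<pi> d x = (1 - x (m - 1)) * x (m - 2) * zeta m \<pi> d x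
     + x (m - 1) * (1 - x (m - 2)) * eta m \<pi> d x + (1 - d) * x (m - 1) * x (m - 2)"

lemma gfun_eq: "gfun q m \<pi> c d = (\<lambda>x. int (q div 2) * (gfun_core m \<pi> d x mod 2) + c)"
  by (simp add: gfun_def gfun_core_def fun_eq_iff)

lemma zeta_eq: "n \<ge> 2 \<Longrightarrow> zeta (n + 2) \<pi> d x = (path_form n \<pi> x + d * x (\<pi> (n - 1))) mod 2"
  by (simp add: zeta_def path_form_def numeral_eq_Suc)

lemma eta_eq:
  "n \<ge> 2 \<Longrightarrow> eta (n + 2) \<pi> d x
    = (path_form n \<pi> (\<lambda>j. 1 - x j) + (1 - d) * (1 - x (\<pi> (n - 1))) + d) mod 2"
  by (simp add: eta_def path_form_def numeral_eq_Suc)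

lemma gfun_core_exp_mult_add:
  assumes perm: "\<pi> permutes {0..n - 1}" and n: "n \<ge> 2" and r: "r < 2 ^ n"
  shows "gfun_core (n + 2) \<pi> d (bit_of (2 ^ n * h + r))
    = (1 - bit_of h 1) * bit_of h 0 * zeta (n + 2) \<pi> d (bit_of r)
      + bit_of h 1 * (1 - bit_of h 0) * eta (n + 2) \<pi> d (bit_of r) + (1 - d) * bit_of h 1 * bit_of h 0"
proof -
  have low: "bit_of (2 ^ n * h + r) j = bit_of r j" if "j < n" for j
    using that by (simp add: bit_of_exp_mult_add[OF r])
  have "\<pi> (n - 1) < n"
    using permutes_in_image[OF perm, of "n - 1"] n by auto
  then have "zeta (n + 2) \<pi> d (bit_of (2 ^ n * h + r)) = zeta (n + 2) \<pi> d (bit_of r)"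
    and "eta (n + 2) \<pi> d (bit_of (2 ^ n * h + r)) = eta (n + 2) \<pi> d (bit_of r)"
    using path_form_cong[OF perm n, of "bit_of (2 ^ n * h + r)" "bit_of r"]
      path_form_cong[OF perm n, of "\<lambda>j. 1 - bit_of (2 ^ n * h + r) j" "\<lambda>j. 1 - bit_of r j"]
    unfolding zeta_eq[OF n] eta_eq[OF n] by (simp_all add: low)
  then show ?thesis
    by (simp add: gfun_core_def bit_of_exp_mult_add[OF r])
qed

lemma parity_sign_gfun_core_blocks:
  assumes perm: "\<pi> permutes {0..n - 1}" and n: "n \<ge> 2" and r: "r < 2 ^ n"
  shows "parity_sign (gfun_core (n + 2) \<pi> d (bit_of r)) = 1"
    and "parity_sign (gfun_core (n + 2) \<pi> d (bit_of (2 ^ n + r)))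
      = parity_sign (path_form n \<pi> (bit_of r) + d * bit_of r (\<pi> (n - 1)))"
    and "parity_sign (gfun_core (n + 2) \<pi> d (bit_of (2 * 2 ^ n + (2 ^ n - 1 - r))))
      = parity_sign (path_form n \<pi> (bit_of r) + (1 - d) * bit_of r (\<pi> (n - 1)) + d)"
    and "parity_sign (gfun_core (n + 2) \<pi> d (bit_of (3 * 2 ^ n))) = parity_sign (1 - d)"
proof -
  have bits: "bit_of 0 j = 0" "bit_of 1 0 = 1" "bit_of 1 1 = 0" "bit_of 2 0 = 0" "bit_of 2 1 = 1"
    "bit_of 3 0 = 1" "bit_of 3 1 = 1" for j
    by (simp_all add: bit_of_def)
  have compl: "1 - bit_of (2 ^ n - 1 - r) j = bit_of r j" if "j < n" for j
    using bit_of_complement[OF r that] by simp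
  have "2 ^ n - 1 - r < (2::nat) ^ n" "(0::nat) < 2 ^ n"
    by simp_all
  note blocks = gfun_core_exp_mult_add[OF perm n r, of d 0] gfun_core_exp_mult_add[OF perm n r, of d 1]
    gfun_core_exp_mult_add[OF perm n this(1), of d 2] gfun_core_exp_mult_add[OF perm n this(2), of d 3]
  have "\<pi> (n - 1) < n"
    using permutes_in_image[OF perm, of "n - 1"] n by auto
  moreover have "path_form n \<pi> (\<lambda>j. 1 - bit_of (2 ^ n - 1 - r) j) = path_form n \<pi> (bit_of r)"
    by (rule path_form_cong[OF perm n]) (rule compl)
  ultimately have "eta (n + 2) \<pi> d (bit_of (2 ^ n - 1 - r))
      = (path_form n \<pi> (bit_of r) + (1 - d) * bit_of r (\<pi> (n - 1)) + d) mod 2"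
    unfolding eta_eq[OF n] by (simp only: compl)
  then show "parity_sign (gfun_core (n + 2) \<pi> d (bit_of r)) = 1"
    and "parity_sign (gfun_core (n + 2) \<pi> d (bit_of (2 ^ n + r)))
      = parity_sign (path_form n \<pi> (bit_of r) + d * bit_of r (\<pi> (n - 1)))"
    and "parity_sign (gfun_core (n + 2) \<pi> d (bit_of (2 * 2 ^ n + (2 ^ n - 1 - r))))
      = parity_sign (path_form n \<pi> (bit_of r) + (1 - d) * bit_of r (\<pi> (n - 1)) + d)"
    and "parity_sign (gfun_core (n + 2) \<pi> d (bit_of (3 * 2 ^ n))) = parity_sign (1 - d)"
    using blocks[unfolded bits zeta_eq[OF n]] by (simp_all add: mult.commute[of _ "2 ^ n"])
qed

lemma PsiL_gfun_parity:
  assumes q: "q > 0" "even q" and k: "k < 2 * 2 ^ n + 2"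
  shows "PsiL q (n + 2) (2 ^ n - 1) (gfun q (n + 2) \<pi> c d) k
    = omega q powi c * of_int (parity_sign (gfun_core (n + 2) \<pi> d (bit_of (k + (2 ^ n - 1)))))"
proof -
  have "(2::nat) ^ (n + 2) = 4 * 2 ^ n" "(0::nat) < 2 ^ n"
    by (simp_all add: power_add)
  then have "k < 2 ^ (n + 2) - 2 * (2 ^ n - 1)" "k + (2 ^ n - 1) < 2 ^ (n + 2)"
    using k by linarith+
  then show ?thesis
    unfolding PsiL_def gfun_eq by (simp add: Psi_half_parity[OF q])
qed

lemma PsiL_gfun:
  assumes q: "q > 0" "even q" and perm: "\<pi> permutes {0..n - 1}" and n: "n \<ge> 2"
    and k: "k < 2 * 2 ^ n + 2" and d: "d = 0 \<or> d = 1"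
  shows "PsiL q (n + 2) (2 ^ n - 1) (gfun q (n + 2) \<pi> c d) k
    = omega q powi c * of_int ((if d = 0 then czcp_a else czcp_b) (2 ^ n) (golay_seq n \<pi>) (golay_mate n \<pi>) k)"
proof -
  define M :: nat where "M = 2 ^ n"
  have "M \<ge> 4"
    using power_increasing[OF n, of "2::nat"] unfolding M_def by simp
  note blocks = parity_sign_gfun_core_blocks[OF perm n, folded M_def]
  consider "k = 0" | "1 \<le> k" "k \<le> M" | "M + 1 \<le> k" "k \<le> 2 * M" | "k = 2 * M + 1"
    using k unfolding M_def by linarith
  then have "parity_sign (gfun_core (n + 2) \<pi> d (bit_of (k + (M - 1))))
      = (if d = 0 then czcp_a else czcp_b) M (golay_seq n \<pi>) (golay_mate n \<pi>) k"
  proof cases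
    case 1
    then show ?thesis
      using blocks(1)[of "M - 1"] by (simp add: M_def czcp_a_def czcp_b_def)
  next
    case 2
    then have "k + (M - 1) = M + (k - 1)" "k - 1 < M"
      by simp_all
    then show ?thesis
      using 2 blocks(2)[of "k - 1"] d
      by (auto simp: M_def czcp_a_def czcp_b_def golay_seq_def golay_mate_def)
  next
    case 3
    then have "k + (M - 1) = 2 * M + (M - 1 - (2 * M - k))" "2 * M - k < M"
      by simp_all
    then show ?thesis
      using 3 blocks(3)[of "2 * M - k"] d \<open>M \<ge> 4\<close>
      by (auto simp: M_def czcp_a_def czcp_b_def golay_seq_def golay_mate_def parity_sign_add)
  next
    case 4
    then have "k + (M - 1) = 3 * M"
      using \<open>M \<ge> 4\<close> by simp
    then show ?thesis
      using 4 blocks(4)[of 0] d by (auto simp: M_def czcp_a_def czcp_b_def)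
  qed
  then show ?thesis
    using PsiL_gfun_parity[OF q k] unfolding M_def by simp
qed

theorem theorem1:
  fixes q m :: nat and \<pi> :: "nat \<Rightarrow> nat" and c :: int
  assumes "q \<ge> 2" and "even q" and "m \<ge> 4"
    and "\<pi> permutes {0..m - 3}"
  shows "CZCP (2 ^ (m - 1) + 2) (2 ^ \<pi> (m - 3) + 1)
           (PsiL q m (2 ^ (m - 2) - 1) (gfun q m \<pi> c 0))
           (PsiL q m (2 ^ (m - 2) - 1) (gfun q m \<pi> c 1))"
proof -
  define n where "n = m - 2"
  have m: "m = n + 2" and n: "n \<ge> 2"
    using \<open>m \<ge> 4\<close> unfolding n_def by simp_all
  have perm: "\<pi> permutes {0..n - 1}"
    using assms(4) m by (simp add: numeral_eq_Suc)
  have q: "q > 0" "even q"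
    using assms(1,2) by simp_all
  have "\<pi> (n - 1) < n"
    using permutes_in_image[OF perm, of "n - 1"] n by auto
  then have s: "2 ^ \<pi> (n - 1) < (2::nat) ^ n"
    by simp
  have "CZCP (2 * 2 ^ n + 2) (2 ^ \<pi> (n - 1) + 1)
      (PsiL q (n + 2) (2 ^ n - 1) (gfun q (n + 2) \<pi> c 0)) (PsiL q (n + 2) (2 ^ n - 1) (gfun q (n + 2) \<pi> c 1))"
    by (rule CZCP_of_golay[OF golay_complementary[OF perm n] golay_seq_eq_mate s])
      (use PsiL_gfun[OF q perm n] norm_omega in \<open>auto simp: norm_power_int\<close>)
  then show ?thesis
    using m by (simp add: numeral_eq_Suc)
qed

end
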